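(* Let $I$ be an instance of SPA-S and let $\mathcal{M}$ be the set of all stable matchings of $I$. The student-oriented dominance relation $\preceq$ is a partial order (reflexive, anti-symmetric and transitive) on $\mathcal{M}$.
   Context: An instance $I$ of SPA-S consists of a finite set $\mathcal{S}$ of students, a finite set $\mathcal{P}$ of projects and a finite set $\mathcal{L}$ of lecturers. Each student $s_i$ ranks a subset $A_i\subseteq\mathcal{P}$ (its acceptable projects) in strict order. Each project is offered by exactly one lecturer; lecturer $l_k$ offers a nonempty set $P_k\subseteq\mathcal{P}$, the $P_k$ partitioning $\mathcal{P}$. Each lecturer $l_k$ ranks in strict order the students who find at least one project of $P_k$ acceptable. Projects have capacities $c_j\in\mathbb{Z}^+$, lecturers have capacities $d_k\in\mathbb{Z}^+$ with $\max\{c_j:p_j\in P_k\}\le d_k\le\sum\{c_j:p_j\in P_k\}$. A pair $(s_i,p_j)$, $p_j$ offered by $l_k$, is acceptable if $p_j\in A_i$ and $s_i$ is on $l_k$'s list. A matching $M$ is a set of acceptable pairs with each student in at most one pair, $|M(p_j)|\le c_j$, $|M(l_k)|\le d_k$, where $M(s_i)$, $M(p_j)$, $M(l_k)$ denote the project of $s_i$, the students assigned to $p_j$, and the students assigned to projects of $l_k$. Undersubscribed/full means fewer than/exactly capacity many assigned students. An acceptable pair $(s_i,p_j)\notin M$ ($p_j$ offered by $l_k$) blocks $M$ if ($s_i$ is unassigned or prefers $p_j$ to $M(s_i)$) and one of: (P1) $p_j$ and $l_k$ undersubscribed; (P2) $p_j$ undersubscribed, $l_k$ full, $s_i\in M(l_k)$;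 (P3) $p_j$ undersubscribed, $l_k$ full, $l_k$ prefers $s_i$ to the worst student of $M(l_k)$; (P4) $p_j$ full and $l_k$ prefers $s_i$ to the worst student of $M(p_j)$. $M$ is stable if it has no blocking pair. A student prefers $M$ to $M'$ if assigned in both and prefers $M(s_i)$ to $M'(s_i)$; is indifferent if unassigned in both or $M(s_i)=M'(s_i)$. $M\preceq M'$ iff every student prefers $M$ to $M'$ or is indifferent. It is known that exactly the same students are unassigned in all stable matchings of $I$. *)

theory Defs
  imports Main
begin

text \<open>An instance of SPA-S. Preferences are strict relations: (p,q) \<in> spref I s means
  student s prefers p to q; (s,t) \<in> lpref I l means lecturer l prefers s to t.\<close>

record ('s, 'p, 'l) spa =
  students  :: "'s set"
  projects  :: "'p set"
  lecturers :: "'l set"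
  acc       :: "'s \<Rightarrow> 'p set"
  spref     :: "'s \<Rightarrow> ('p \<times> 'p) set"
  offer     :: "'p \<Rightarrow> 'l"
  lpref     :: "'l \<Rightarrow> ('s \<times> 's) set"
  pcap      :: "'p \<Rightarrow> nat"
  lcap      :: "'l \<Rightarrow> nat"

definition offered :: "('s, 'p, 'l) spa \<Rightarrow> 'l \<Rightarrow> 'p set" where
  "offered I l = {p \<in> projects I. offer I p = l}"

definition llist :: "('s, 'p, 'l) spa \<Rightarrow> 'l \<Rightarrow> 's set" where
  "llist I l = {s \<in> students I. acc I s \<inter> offered I l \<noteq> {}}"

definition spa_instance :: "('s, 'p, 'l) spa \<Rightarrow> bool" where
  "spa_instance I \<longleftrightarrow>
     finite (students I) \<and> finite (projects I) \<and> finite (lecturers I) \<and>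
     (\<forall>s \<in> students I. acc I s \<subseteq> projects I \<and>
        strict_linear_order_on (acc I s) (spref I s) \<and> spref I s \<subseteq> acc I s \<times> acc I s) \<and>
     (\<forall>p \<in> projects I. offer I p \<in> lecturers I \<and> pcap I p > 0) \<and>
     (\<forall>l \<in> lecturers I. offered I l \<noteq> {} \<and>
        strict_linear_order_on (llist I l) (lpref I l) \<and> lpref I l \<subseteq> llist I l \<times> llist I l \<and>
        lcap I l > 0 \<and>
        Max (pcap I ` offered I l) \<le> lcap I l \<and> lcap I l \<le> (\<Sum>p \<in> offered I l. pcap I p))"

definition acceptable :: "('s, 'p, 'l) spa \<Rightarrow> 's \<Rightarrow> 'p \<Rightarrow> bool" where
  "acceptable I s p \<longleftrightarrow> s \<in> students I \<and> p \<in> projects I \<and> p \<in> acc I s \<and> s \<in> llist I (offer I p)"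

definition Mstud :: "('s \<times> 'p) set \<Rightarrow> 's \<Rightarrow> 'p option" where
  "Mstud M s = (if \<exists>p. (s, p) \<in> M then Some (THE p. (s, p) \<in> M) else None)"

definition Mproj :: "('s \<times> 'p) set \<Rightarrow> 'p \<Rightarrow> 's set" where
  "Mproj M p = {s. (s, p) \<in> M}"

definition Mlect :: "('s, 'p, 'l) spa \<Rightarrow> ('s \<times> 'p) set \<Rightarrow> 'l \<Rightarrow> 's set" where
  "Mlect I M l = {s. \<exists>p. (s, p) \<in> M \<and> offer I p = l}"

definition matching :: "('s, 'p, 'l) spa \<Rightarrow> ('s \<times> 'p) set \<Rightarrow> bool" where
  "matching I M \<longleftrightarrow>
     (\<forall>(s, p) \<in> M. acceptable I s p) \<and>
     (\<forall>s p q. (s, p) \<in> M \<longrightarrow> (s, q) \<in> M \<longrightarrow> p = q) \<and>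
     (\<forall>p \<in> projects I. card (Mproj M p) \<le> pcap I p) \<and>
     (\<forall>l \<in> lecturers I. card (Mlect I M l) \<le> lcap I l)"

definition prefers_to_worst :: "('s, 'p, 'l) spa \<Rightarrow> 'l \<Rightarrow> 's \<Rightarrow> 's set \<Rightarrow> bool" where
  "prefers_to_worst I l s T \<longleftrightarrow>
     (\<exists>w \<in> T. (\<forall>w' \<in> T. w' = w \<or> (w', w) \<in> lpref I l) \<and> (s, w) \<in> lpref I l)"

definition blocking :: "('s, 'p, 'l) spa \<Rightarrow> ('s \<times> 'p) set \<Rightarrow> 's \<Rightarrow> 'p \<Rightarrow> bool" where
  "blocking I M s p \<longleftrightarrow>
     (let l = offer I p in
      acceptable I s p \<and> (s, p) \<notin> M \<and>
      (Mstud M s = None \<or> (\<exists>q. Mstud M s = Some q \<and> (p, q) \<in> spref I s)) \<and>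
      ((card (Mproj M p) < pcap I p \<and> card (Mlect I M l) < lcap I l) \<or>
       (card (Mproj M p) < pcap I p \<and> card (Mlect I M l) = lcap I l \<and> s \<in> Mlect I M l) \<or>
       (card (Mproj M p) < pcap I p \<and> card (Mlect I M l) = lcap I l \<and>
          prefers_to_worst I l s (Mlect I M l)) \<or>
       (card (Mproj M p) = pcap I p \<and> prefers_to_worst I l s (Mproj M p))))"

definition stable :: "('s, 'p, 'l) spa \<Rightarrow> ('s \<times> 'p) set \<Rightarrow> bool" where
  "stable I M \<longleftrightarrow> matching I M \<and> (\<forall>s p. \<not> blocking I M s p)"

definition stable_matchings :: "('s, 'p, 'l) spa \<Rightarrow> ('s \<times> 'p) set set" where
  "stable_matchings I = {M. stable I M}"

definition stud_prefers :: "('s, 'p, 'l) spa \<Rightarrow> 's \<Rightarrow> ('s \<times> 'p) set \<Rightarrow> ('s \<times> 'p) set \<Rightarrow> bool" where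
  "stud_prefers I s M M' \<longleftrightarrow>
     (\<exists>p q. Mstud M s = Some p \<and> Mstud M' s = Some q \<and> (p, q) \<in> spref I s)"

definition stud_indifferent :: "'s \<Rightarrow> ('s \<times> 'p) set \<Rightarrow> ('s \<times> 'p) set \<Rightarrow> bool" where
  "stud_indifferent s M M' \<longleftrightarrow> Mstud M s = Mstud M' s"

definition dominates :: "('s, 'p, 'l) spa \<Rightarrow> ('s \<times> 'p) set \<Rightarrow> ('s \<times> 'p) set \<Rightarrow> bool" where
  "dominates I M M' \<longleftrightarrow> (\<forall>s \<in> students I. stud_prefers I s M M' \<or> stud_indifferent s M M')"

definition dom_rel :: "('s, 'p, 'l) spa \<Rightarrow> (('s \<times> 'p) set \<times> ('s \<times> 'p) set) set" where
  "dom_rel I = {(M, M'). M \<in> stable_matchings I \<and> M' \<in> stable_matchings I \<and> dominates I M M'}"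

end

theory Submission
  imports Defs
begin

text \<open>Dominance compares matchings student by student, and for each student it is the reflexive
  closure of a strict partial order on assignments; so it is a preorder. It is antisymmetric on
  matchings because a matching is determined by the assignment it gives to each student.\<close>

lemma matching_Mstud_eq_Some_iff:
  assumes "matching I M"
  shows "Mstud M s = Some p \<longleftrightarrow> (s, p) \<in> M"
proof -
  have "(THE p. (s, p) \<in> M) = p" if "(s, p) \<in> M" for p
    using assms that unfolding matching_def by (intro the_equality) blast+
  then show ?thesis
    unfolding Mstud_def by (auto intro: theI)
qed

lemma matching_Domain_subset_students:
  assumes "matching I M"
  shows "Domain M \<subseteq> students I"
  using assms unfolding matching_def acceptable_def by auto

lemma matching_eqI:
  assumes "matching I M" "matching I M'"
    and "\<And>s. s \<in> students I \<Longrightarrow> Mstud M s = Mstud M' s"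
  shows "M = M'"
proof (intro set_eqI iffI)
  fix sp assume "sp \<in> M"
  then show "sp \<in> M'"
    using assms matching_Domain_subset_students[OF assms(1)]
    by (cases sp) (force simp: matching_Mstud_eq_Some_iff[symmetric])
next
  fix sp assume "sp \<in> M'"
  then show "sp \<in> M"
    using assms matching_Domain_subset_students[OF assms(2)]
    by (cases sp) (force simp: matching_Mstud_eq_Some_iff[symmetric])
qed

lemma spa_instance_spref_trans:
  assumes "spa_instance I" "s \<in> students I"
  shows "trans (spref I s)"
  using assms unfolding spa_instance_def strict_linear_order_on_def by auto

lemma spa_instance_spref_irrefl:
  assumes "spa_instance I" "s \<in> students I"
  shows "irrefl (spref I s)"
  using assms unfolding spa_instance_def strict_linear_order_on_def by auto

lemma stud_prefers_or_indifferent_trans: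
  assumes "trans (spref I s)"
    and "stud_prefers I s M M' \<or> stud_indifferent s M M'"
    and "stud_prefers I s M' M'' \<or> stud_indifferent s M' M''"
  shows "stud_prefers I s M M'' \<or> stud_indifferent s M M''"
  using assms unfolding stud_prefers_def stud_indifferent_def by (auto dest: transD)

lemma stud_prefers_or_indifferent_antisym:
  assumes "trans (spref I s)" "irrefl (spref I s)"
    and "stud_prefers I s M M' \<or> stud_indifferent s M M'"
    and "stud_prefers I s M' M \<or> stud_indifferent s M' M"
  shows "Mstud M s = Mstud M' s"
  using assms unfolding stud_prefers_def stud_indifferent_def irrefl_def by (auto dest: transD)

lemma dominates_refl: "dominates I M M"
  unfolding dominates_def stud_indifferent_def by simp

lemma dominates_trans:
  assumes "\<And>s. s \<in> students I \<Longrightarrow> trans (spref I s)"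
    and "dominates I M M'" "dominates I M' M''"
  shows "dominates I M M''"
  using assms stud_prefers_or_indifferent_trans unfolding dominates_def by metis

lemma dominates_antisym:
  assumes "\<And>s. s \<in> students I \<Longrightarrow> trans (spref I s)"
    and "\<And>s. s \<in> students I \<Longrightarrow> irrefl (spref I s)"
    and "matching I M" "matching I M'"
    and "dominates I M M'" "dominates I M' M"
  shows "M = M'"
  using assms(3,4)
proof (rule matching_eqI)
  fix s assume "s \<in> students I"
  then show "Mstud M s = Mstud M' s"
    using assms(1,2,5,6) stud_prefers_or_indifferent_antisym unfolding dominates_def by metis
qed

theorem proposition1:
  fixes I :: "('s, 'p, 'l) spa"
  assumes "spa_instance I"
  shows "partial_order_on (stable_matchings I) (dom_rel I)"
proof -
  note spref_trans = spa_instance_spref_trans[OF assms]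
  note spref_irrefl = spa_instance_spref_irrefl[OF assms]
  have stable_matching: "matching I M" if "M \<in> stable_matchings I" for M
    using that unfolding stable_matchings_def stable_def by simp
  have "antisym (dom_rel I)"
  proof (rule antisymI)
    fix M M' assume "(M, M') \<in> dom_rel I" "(M', M) \<in> dom_rel I"
    then show "M = M'"
      using dominates_antisym[OF spref_trans spref_irrefl] stable_matching
      unfolding dom_rel_def by blast
  qed
  moreover have "trans (dom_rel I)"
    using dominates_trans[OF spref_trans] unfolding dom_rel_def by (intro transI) blast
  moreover have "refl_on (stable_matchings I) (dom_rel I)"
    using dominates_refl unfolding refl_on_def dom_rel_def by blast
  ultimately show ?thesis
    unfolding partial_order_on_def preorder_on_def dom_rel_def by blast
qed

end
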